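(* Let $\mathcal{I}\in\mathbb{R}^{H\times W\times U}$ be a hyperspectral image and let $\mathcal{D}_{\mathcal{I}}=\{(B_i,y_i)\}_{i=1}^{M}$ be the dataset of cuboids built from it, where $B_i\in\mathbb{R}^{P\times P\times U}$ is the cuboid centred at the $i$-th pixel and $y_i\in\mathcal{Y}=\{1,\dots,K\}$ is the label of that central pixel. Suppose $\mathcal{D}_{\mathcal{I}}$ is partitioned into $\mathcal{D}_{\text{train}}$, $\mathcal{D}_{\text{val}}$, and a set $\mathcal{D}_{\text{cal}}\cup\mathcal{D}_{\text{test}}$, where the split of $\mathcal{D}_{\text{cal}}\cup\mathcal{D}_{\text{test}}$ into the calibration set $\mathcal{D}_{\text{cal}}=\{(B_i,y_i)\}_{i=1}^n$ and the test set $\mathcal{D}_{\text{test}}=\{(B_{n+j},y_{n+j})\}_{j=1}^m$ is made uniformly at random. Let $S:(B,y)\mapsto S(B,y)\in\mathbb{R}$ be a non-conformity score function derived from a pre-trained HSI classifier (which may have been trained with access to the whole image, including pixels of calibration and test cuboids), and assume that for every cuboid $B$ and every label $y\in\mathcal{Y}$, the value $S(B,y)$ is invariant under any permutation of the union $\mathcal{D}_{\text{cal}}\cup\mathcal{D}_{\text{test}}$ (i.e., it does not depend on which elements of this union are designated as calibration versus test samples). Define $s_i:=S(B_i,y_i)$ for $i=1,\dots,n+m$. Then the calibration scores $\{s_i\}_{i=1}^n$ and the test scores $\{s_{n+j}\}_{j=1}^m$ are exchangeable.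
   Context: A non-conformity score function $S(B,y)$ measures how poorly label $y$ conforms to the classifier's prediction at cuboid $B$ (e.g., computed from the classifier's softmax probabilities $\hat\pi_\theta(B)$ and label ranks). A finite sequence of random variables is exchangeable if its joint distribution is invariant under every permutation of the indices. *)

theory Defs
  imports "HOL-Probability.Probability"
begin

text \<open>A random finite sequence (x_0,...,x_{N-1}), represented as a distribution on
  functions nat => 'a (only indices below N matter), is exchangeable if its joint
  distribution is invariant under every permutation of the indices {0..<N}.\<close>
definition exchangeable :: "nat \<Rightarrow> (nat \<Rightarrow> 'a) pmf \<Rightarrow> bool" where
  "exchangeable N D \<longleftrightarrow>
     (\<forall>\<pi>. \<pi> permutes {..<N} \<longrightarrow> map_pmf (\<lambda>x. x \<circ> \<pi>) D = D)"

text \<open>Uniformly random arrangement of the pooled calibration+test data: position i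
  receives pool element sigma i, positions 0..<n are calibration, n..<n+m are test.\<close>
definition random_arrangement :: "nat \<Rightarrow> (nat \<Rightarrow> nat) pmf" where
  "random_arrangement N = pmf_of_set {\<sigma>. \<sigma> permutes {..<N}}"

text \<open>Scores s_i = S(B_i, y_i) of the arranged data. The score function may depend on
  the whole arranged dataset (first argument), e.g. through the classifier.\<close>
definition arranged_scores ::
  "nat \<Rightarrow> ((nat \<Rightarrow> 'b \<times> nat) \<Rightarrow> 'b \<Rightarrow> nat \<Rightarrow> real) \<Rightarrow> (nat \<Rightarrow> 'b \<times> nat)
     \<Rightarrow> (nat \<Rightarrow> nat) \<Rightarrow> nat \<Rightarrow> real" where
  "arranged_scores N S z \<sigma> = (\<lambda>i. if i < N
       then S (z \<circ> \<sigma>) (fst (z (\<sigma> i))) (snd (z (\<sigma> i))) else 0)"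

end

theory Submission
  imports Defs
begin

text \<open>Relabelling the pool by a permutation \<open>\<pi>\<close> turns the uniformly random arrangement
  \<open>\<sigma>\<close> into \<open>\<sigma> \<circ> \<pi>\<close>, which is again uniform on the permutations. Since the score function
  only sees the arranged data up to such a relabelling, permuting the score vector by \<open>\<pi>\<close>
  is the same as scoring the arrangement \<open>\<sigma> \<circ> \<pi>\<close>; hence the law of the score vector is
  invariant under \<open>\<pi>\<close>.\<close>

lemma bij_betw_comp_permutes:
  assumes "\<pi> permutes A"
  shows "bij_betw (\<lambda>\<sigma>. \<sigma> \<circ> \<pi>) {\<sigma>. \<sigma> permutes A} {\<sigma>. \<sigma> permutes A}"
proof (rule bij_betw_byWitness[where f' = "\<lambda>\<sigma>. \<sigma> \<circ> inv \<pi>"])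
  have inv: "inv \<pi> permutes A"
    using assms by (rule permutes_inv)
  show "\<forall>\<sigma>\<in>{\<sigma>. \<sigma> permutes A}. \<sigma> \<circ> \<pi> \<circ> inv \<pi> = \<sigma>"
    using permutes_inv_o(1)[OF assms] by (simp add: comp_assoc)
  show "\<forall>\<sigma>\<in>{\<sigma>. \<sigma> permutes A}. \<sigma> \<circ> inv \<pi> \<circ> \<pi> = \<sigma>"
    using permutes_inv_o(2)[OF assms] by (simp add: comp_assoc)
  show "(\<lambda>\<sigma>. \<sigma> \<circ> \<pi>) ` {\<sigma>. \<sigma> permutes A} \<subseteq> {\<sigma>. \<sigma> permutes A}"
    using permutes_compose[OF assms] by blast
  show "(\<lambda>\<sigma>. \<sigma> \<circ> inv \<pi>) ` {\<sigma>. \<sigma> permutes A} \<subseteq> {\<sigma>. \<sigma> permutes A}"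
    using permutes_compose[OF inv] by blast
qed

lemma map_pmf_comp_permutes_random_arrangement:
  assumes "\<pi> permutes {..<N}"
  shows "map_pmf (\<lambda>\<sigma>. \<sigma> \<circ> \<pi>) (random_arrangement N) = random_arrangement N"
  unfolding random_arrangement_def
proof (rule map_pmf_of_set_bij_betw)
  show "bij_betw (\<lambda>\<sigma>. \<sigma> \<circ> \<pi>) {\<sigma>. \<sigma> permutes {..<N}} {\<sigma>. \<sigma> permutes {..<N}}"
    using assms by (rule bij_betw_comp_permutes)
  show "{\<sigma>. \<sigma> permutes {..<N}} \<noteq> {}"
    using permutes_id by blast
  show "finite {\<sigma>. \<sigma> permutes {..<N}}"
    by (rule finite_permutations) simp
qed

lemma exchangeable_map_random_arrangement:
  assumes equivariant: "\<And>\<sigma> \<pi>. \<sigma> permutes {..<N} \<Longrightarrow> \<pi> permutes {..<N} \<Longrightarrow>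
      g \<sigma> \<circ> \<pi> = g (\<sigma> \<circ> \<pi>)"
  shows "exchangeable N (map_pmf g (random_arrangement N))"
  unfolding exchangeable_def
proof (intro allI impI)
  fix \<pi> :: "nat \<Rightarrow> nat"
  assume \<pi>: "\<pi> permutes {..<N}"
  have support: "set_pmf (random_arrangement N) = {\<sigma>. \<sigma> permutes {..<N}}"
    unfolding random_arrangement_def
    by (rule set_pmf_of_set) (auto intro: permutes_id finite_permutations)
  have "map_pmf (\<lambda>x. x \<circ> \<pi>) (map_pmf g (random_arrangement N))
      = map_pmf (\<lambda>\<sigma>. g \<sigma> \<circ> \<pi>) (random_arrangement N)"
    by (simp add: pmf.map_comp o_def)
  also have "\<dots> = map_pmf (\<lambda>\<sigma>. g (\<sigma> \<circ> \<pi>)) (random_arrangement N)"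
    by (rule map_pmf_cong) (simp_all add: support equivariant \<pi>)
  also have "\<dots> = map_pmf g (map_pmf (\<lambda>\<sigma>. \<sigma> \<circ> \<pi>) (random_arrangement N))"
    by (simp add: pmf.map_comp o_def)
  also have "\<dots> = map_pmf g (random_arrangement N)"
    using \<pi> by (simp add: map_pmf_comp_permutes_random_arrangement)
  finally show "map_pmf (\<lambda>x. x \<circ> \<pi>) (map_pmf g (random_arrangement N))
      = map_pmf g (random_arrangement N)" .
qed

lemma arranged_scores_comp_permutes:
  assumes invariant: "\<And>\<pi>. \<pi> permutes {..<N} \<Longrightarrow> S (z \<circ> \<pi>) = S z"
    and \<sigma>: "\<sigma> permutes {..<N}" and \<pi>: "\<pi> permutes {..<N}"
  shows "arranged_scores N S z \<sigma> \<circ> \<pi> = arranged_scores N S z (\<sigma> \<circ> \<pi>)"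
proof
  fix i
  have "S (z \<circ> \<sigma>) = S (z \<circ> (\<sigma> \<circ> \<pi>))"
    using invariant \<sigma> permutes_compose[OF \<pi> \<sigma>] by simp
  moreover have "\<pi> i < N \<longleftrightarrow> i < N"
    using permutes_in_image[OF \<pi>] by simp
  ultimately show "(arranged_scores N S z \<sigma> \<circ> \<pi>) i = arranged_scores N S z (\<sigma> \<circ> \<pi>) i"
    unfolding arranged_scores_def by simp
qed

theorem theorem2:
  fixes n m K :: nat
    and z :: "nat \<Rightarrow> 'b \<times> nat"
    and S :: "(nat \<Rightarrow> 'b \<times> nat) \<Rightarrow> 'b \<Rightarrow> nat \<Rightarrow> real"
  assumes labels: "\<And>i. i < n + m \<Longrightarrow> snd (z i) \<in> {1..K}"
    and invariant: "\<And>\<pi>. \<pi> permutes {..<n + m} \<Longrightarrow> S (z \<circ> \<pi>) = S z"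
  shows "exchangeable (n + m)
           (map_pmf (arranged_scores (n + m) S z) (random_arrangement (n + m)))"
  by (rule exchangeable_map_random_arrangement)
    (rule arranged_scores_comp_permutes[OF invariant])

end
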